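(* Let $m\ge1$ be an integer and $c=-k\in\mathbb Z_{\le0}$. Consider the $(m+1)$-dimensional space of solutions of $D^c_{m+1}F=0$ with ordered basis (column vector) $\mathcal B^*=(Li^*_{m,-k}(z),\ b_{m-1}(z),\dots,b_0(z))$, where $b_j(z)=\frac1{j!}z^{1-c}(\log z)^j$ and $Li^*_{m,-k}(z)=\sum_{n\ge0,\,n\ne k}\frac{z^{n+1}}{(n-k)^m}+\frac1{m!}z^{k+1}(\log z)^m$, taken as germs at $z=-1$. For $j\in\{0,1\}$, analytic continuation of $\mathcal B^*$ along $Z_j$ yields $\rho_{m,c}([Z_j])\mathcal B^*$, where $\rho_{m,c}([Z_0])$ is the upper triangular $(m+1)\times(m+1)$ matrix with $(i,l)$-entry $\frac{(2\pi i)^{l-i}}{(l-i)!}$ for $l\ge i$ and $0$ for $l<i$, and $\rho_{m,c}([Z_1])$ is the identity matrix except that its $(1,2)$-entry is $-2\pi i$. In these cases the image of $\rho_{m,c}$ lies in a unipotent subgroup of $GL(m+1,\mathbb C)$.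
   Context: $D^c_{m+1}=z^2\frac{d}{dz}\left(\frac{1-z}{z}\right)\left(z\frac{d}{dz}+c-1\right)^m$. $\log$ is the principal branch, $z^{1-c}=e^{(1-c)\log z}=z^{k+1}$; germs at the base point $z=-1$ are obtained as limits from the upper half-plane of the functions on $\mathbb C\setminus((-\infty,0]\cup[1,\infty))$ (so $\log(-1)=\pi i$). $Z_0$: a simple closed curve based at $-1$ enclosing $0$ counterclockwise and not enclosing $1$. $Z_1$: a simple closed curve based at $-1$ enclosing $1$ counterclockwise, not enclosing $0$, passing above $0$. *)

theory Defs
  imports "HOL-Complex_Analysis.Complex_Analysis"
begin

definition Omega :: "complex set" where
  "Omega = - ({z. z \<in> \<real> \<and> Re z \<le> 0} \<union> {z. z \<in> \<real> \<and> 1 \<le> Re z})"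

text \<open>Upper half-plane: germs at -1 are limits from here.\<close>
definition UHP :: "complex set" where
  "UHP = {z. 0 < Im z}"

text \<open>b_j(z) = z^(1-c) (log z)^j / j!, with c = -k, principal log.\<close>
definition bfun :: "nat \<Rightarrow> nat \<Rightarrow> complex \<Rightarrow> complex" where
  "bfun k j z = z ^ (k + 1) * (Ln z) ^ j / of_nat (fact j)"

definition Lstar_series :: "nat \<Rightarrow> nat \<Rightarrow> complex \<Rightarrow> complex" where
  "Lstar_series m k z =
     (\<Sum>n. if n = k then 0 else z ^ (n + 1) / (of_int (int n - int k)) ^ m)
     + z ^ (k + 1) * (Ln z) ^ m / of_nat (fact m)"

definition Lstar_fun :: "nat \<Rightarrow> nat \<Rightarrow> (complex \<Rightarrow> complex) \<Rightarrow> bool" where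
  "Lstar_fun m k L \<longleftrightarrow> L holomorphic_on Omega \<and>
     (\<forall>z \<in> Omega \<inter> ball 0 1. L z = Lstar_series m k z)"

text \<open>The ordered basis B* = (Li*, b_{m-1}, ..., b_0), 0-indexed.\<close>
definition Bvec :: "nat \<Rightarrow> nat \<Rightarrow> (complex \<Rightarrow> complex) \<Rightarrow> nat \<Rightarrow> complex \<Rightarrow> complex" where
  "Bvec m k L i = (if i = 0 then L else bfun k (m - i))"

definition ancont_along :: "(real \<Rightarrow> complex) \<Rightarrow> (real \<Rightarrow> complex \<Rightarrow> complex) \<Rightarrow> bool" where
  "ancont_along \<gamma> f \<longleftrightarrow>
     (\<forall>t\<in>{0..1}. \<exists>r>0. f t holomorphic_on ball (\<gamma> t) r \<and>
        (\<exists>\<delta>>0. \<forall>s\<in>{0..1}. \<bar>s - t\<bar> < \<delta> \<longrightarrow>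
            \<gamma> s \<in> ball (\<gamma> t) r \<and> (\<forall>\<^sub>F z in nhds (\<gamma> s). f s z = f t z)))"

definition monodromy_is ::
  "(real \<Rightarrow> complex) \<Rightarrow> nat \<Rightarrow> (nat \<Rightarrow> complex \<Rightarrow> complex) \<Rightarrow> (nat \<Rightarrow> nat \<Rightarrow> complex) \<Rightarrow> bool" where
  "monodromy_is \<gamma> n F M \<longleftrightarrow>
     (\<forall>i<n.
        (\<exists>f. ancont_along \<gamma> f \<and> (\<forall>\<^sub>F z in at (-1) within UHP. f 0 z = F i z)) \<and>
        (\<forall>f. ancont_along \<gamma> f \<and> (\<forall>\<^sub>F z in at (-1) within UHP. f 0 z = F i z) \<longrightarrow>
             (\<forall>\<^sub>F z in at (-1) within UHP. f 1 z = (\<Sum>l<n. M i l * F l z))))"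

definition Z0_loop :: "(real \<Rightarrow> complex) \<Rightarrow> bool" where
  "Z0_loop \<gamma> \<longleftrightarrow> simple_path \<gamma> \<and> pathstart \<gamma> = -1 \<and> pathfinish \<gamma> = -1 \<and>
     0 \<notin> path_image \<gamma> \<and> 1 \<notin> path_image \<gamma> \<and>
     winding_number \<gamma> 0 = 1 \<and> winding_number \<gamma> 1 = 0 \<and>
     path_image \<gamma> \<inter> {z. z \<in> \<real> \<and> 1 \<le> Re z} = {}"

definition Z1_loop :: "(real \<Rightarrow> complex) \<Rightarrow> bool" where
  "Z1_loop \<gamma> \<longleftrightarrow> simple_path \<gamma> \<and> pathstart \<gamma> = -1 \<and> pathfinish \<gamma> = -1 \<and>
     0 \<notin> path_image \<gamma> \<and> 1 \<notin> path_image \<gamma> \<and>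
     winding_number \<gamma> 1 = 1 \<and> winding_number \<gamma> 0 = 0 \<and>
     path_image \<gamma> \<inter> {z. Re z = 0 \<and> Im z \<le> 0} = {}"

section \<open>Matrices (square, size n, 0-indexed, as functions)\<close>

definition rho0 :: "nat \<Rightarrow> nat \<Rightarrow> complex" where
  "rho0 i l = (if i \<le> l then (2 * pi * \<i>) ^ (l - i) / of_nat (fact (l - i)) else 0)"

definition rho1 :: "nat \<Rightarrow> nat \<Rightarrow> complex" where
  "rho1 i l = (if i = l then 1 else if i = 0 \<and> l = 1 then - 2 * pi * \<i> else 0)"

definition idm :: "nat \<Rightarrow> nat \<Rightarrow> complex" where
  "idm i l = (if i = l then 1 else 0)"

definition mmul :: "nat \<Rightarrow> (nat \<Rightarrow> nat \<Rightarrow> complex) \<Rightarrow> (nat \<Rightarrow> nat \<Rightarrow> complex) \<Rightarrow> nat \<Rightarrow> nat \<Rightarrow> complex" where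
  "mmul n A B i l = (\<Sum>j<n. A i j * B j l)"

definition meq :: "nat \<Rightarrow> (nat \<Rightarrow> nat \<Rightarrow> complex) \<Rightarrow> (nat \<Rightarrow> nat \<Rightarrow> complex) \<Rightarrow> bool" where
  "meq n A B \<longleftrightarrow> (\<forall>i<n. \<forall>l<n. A i l = B i l)"

fun mpow :: "nat \<Rightarrow> (nat \<Rightarrow> nat \<Rightarrow> complex) \<Rightarrow> nat \<Rightarrow> nat \<Rightarrow> nat \<Rightarrow> complex" where
  "mpow n A 0 = idm"
| "mpow n A (Suc p) = mmul n A (mpow n A p)"

definition unipotent_subgroup :: "nat \<Rightarrow> (nat \<Rightarrow> nat \<Rightarrow> complex) set \<Rightarrow> bool" where
  "unipotent_subgroup n U \<longleftrightarrow>
     idm \<in> U \<and>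
     (\<forall>A\<in>U. \<forall>B\<in>U. \<exists>C\<in>U. meq n C (mmul n A B)) \<and>
     (\<forall>A\<in>U. \<exists>B\<in>U. meq n (mmul n A B) idm \<and> meq n (mmul n B A) idm) \<and>
     (\<forall>A\<in>U. meq n (mpow n (\<lambda>i l. A i l - idm i l) n) (\<lambda>i l. 0))"

end

theory Submission
  imports Defs
begin

text \<open>Every member of the basis has the form A + B (log w)^e with A, B single valued near the
  loop, where w = z for Z_0 and w = 1 - z for Z_1; continuing along a loop that winds once
  around the branch point of log w replaces log w by log w + 2\<pi>i. For Z_0 this acts on
  b_j = z^(k+1) (log z)^j / j! and on Li* = z^(k+1) Li_m(z) + polynomial + b_m, and the binomial
  theorem gives the matrix of (2\<pi>i)^(l-i) / (l-i)!. For Z_1 only Li_m branches: building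
  Li_(j+1) as the primitive of Li_j(z)/z one shows inductively that
  Li_j(z) + (log z)^(j-1) / (j-1)! log(1 - z) continues across [1, \<infinity>), so Li* picks up
  -2\<pi>i b_(m-1). Both matrices are unitriangular, and the unitriangular matrices form a
  unipotent group, inverses being finite Neumann series.\<close>

section \<open>Analytic continuation along paths\<close>

lemma Re_divide_pos_if_near:
  assumes "norm (w - a) < norm a"
  shows "0 < Re (w / a)"
proof -
  have a0: "a \<noteq> 0" using assms by auto
  have "w / a = 1 + (w - a) / a" using a0 by (simp add: field_simps)
  moreover have "norm ((w - a) / a) < 1" using assms a0 by (simp add: norm_divide)
  moreover have "- norm ((w - a) / a) \<le> Re ((w - a) / a)"
    using abs_Re_le_cmod[of "(w - a) / a"] by linarith
  ultimately show ?thesis by simp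
qed

lemma Ln_divide_shift:
  assumes "0 < Re (u / b)" "0 < Re (u / c)" "exp d = b / c" "\<bar>Im d\<bar> < pi / 2"
  shows "Ln (u / b) + d = Ln (u / c)"
proof -
  have "u \<noteq> 0" "b \<noteq> 0" "c \<noteq> 0" using assms(1,2) by auto
  then have "exp (Ln (u / b) + d) = u / c" using assms(3) by (simp add: exp_add)
  moreover have "\<bar>Im (Ln (u / b))\<bar> < pi / 2" using Re_Ln_pos_lt_imp[OF assms(1)] .
  ultimately show ?thesis using assms(4) by (intro Ln_unique[symmetric]) auto
qed

text \<open>Neighbouring elements agree because, once q s is close to q t, the principal
  logarithm of (\<gamma> s - \<zeta>) / (\<gamma> t - \<zeta>) is q s - q t.\<close>
lemma ancont_along_local_log:
  assumes pg: "path \<gamma>" and cq: "continuous_on {0..1} q"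
    and eq: "\<And>t. t \<in> {0..1} \<Longrightarrow> exp (q t) = \<sigma> * (\<gamma> t - \<zeta>)"
  shows "ancont_along \<gamma> (\<lambda>t z. q t + Ln ((z - \<zeta>) / (\<gamma> t - \<zeta>)))"
  unfolding ancont_along_def
proof (intro ballI)
  fix t :: real assume t: "t \<in> {0..1}"
  have nz: "\<gamma> s - \<zeta> \<noteq> 0" if "s \<in> {0..1}" for s
    using eq[OF that] by (metis exp_not_eq_zero mult_zero_right)
  have \<sigma>0: "\<sigma> \<noteq> 0" using eq[OF t] by (metis exp_not_eq_zero mult_zero_left)
  have Re_pos: "0 < Re ((z - \<zeta>) / (\<gamma> s - \<zeta>))" if "dist z (\<gamma> s) < norm (\<gamma> s - \<zeta>)" for z s
    using that by (intro Re_divide_pos_if_near) (simp add: dist_norm)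
  define r where "r = norm (\<gamma> t - \<zeta>)"
  have r0: "r > 0" using nz[OF t] by (simp add: r_def)
  obtain d1 where d1: "d1 > 0" "\<And>s. s \<in> {0..1} \<Longrightarrow> dist s t < d1 \<Longrightarrow> dist (\<gamma> s) (\<gamma> t) < r"
    using pg t r0 unfolding path_def continuous_on_iff by metis
  obtain d2 where d2: "d2 > 0" "\<And>s. s \<in> {0..1} \<Longrightarrow> dist s t < d2 \<Longrightarrow> dist (q s) (q t) < pi / 2"
    using cq t unfolding continuous_on_iff by (metis pi_half_gt_zero)
  have "(\<lambda>z. q t + Ln ((z - \<zeta>) / (\<gamma> t - \<zeta>))) holomorphic_on ball (\<gamma> t) r"
  proof (intro holomorphic_intros)
    fix z assume "z \<in> ball (\<gamma> t) r"
    then have "0 < Re ((z - \<zeta>) / (\<gamma> t - \<zeta>))" by (intro Re_pos) (simp add: r_def dist_commute)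
    then show "(z - \<zeta>) / (\<gamma> t - \<zeta>) \<notin> \<real>\<^sub>\<le>\<^sub>0" by (auto simp: complex_nonpos_Reals_iff)
  qed (use nz t in auto)
  moreover have "\<gamma> s \<in> ball (\<gamma> t) r \<and>
      (\<forall>\<^sub>F z in nhds (\<gamma> s). q s + Ln ((z - \<zeta>) / (\<gamma> s - \<zeta>)) = q t + Ln ((z - \<zeta>) / (\<gamma> t - \<zeta>)))"
    if s: "s \<in> {0..1}" "\<bar>s - t\<bar> < min d1 d2" for s
  proof
    have gs: "dist (\<gamma> s) (\<gamma> t) < r" using d1(2)[OF s(1)] s(2) by (simp add: dist_real_def)
    then show "\<gamma> s \<in> ball (\<gamma> t) r" by (simp add: dist_commute)
    have ex: "exp (q s - q t) = (\<gamma> s - \<zeta>) / (\<gamma> t - \<zeta>)"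
      using eq s(1) t nz \<sigma>0 by (simp add: exp_diff)
    have im: "\<bar>Im (q s - q t)\<bar> < pi / 2"
      using d2(2)[OF s(1)] s(2) abs_Im_le_cmod[of "q s - q t"] by (simp add: dist_norm dist_real_def)
    define W where "W = ball (\<gamma> t) r \<inter> ball (\<gamma> s) (norm (\<gamma> s - \<zeta>))"
    have "open W" "\<gamma> s \<in> W" using gs nz[OF s(1)] by (auto simp: W_def dist_commute)
    moreover have "q s + Ln ((z - \<zeta>) / (\<gamma> s - \<zeta>)) = q t + Ln ((z - \<zeta>) / (\<gamma> t - \<zeta>))"
      if "z \<in> W" for z
    proof -
      have "0 < Re ((z - \<zeta>) / (\<gamma> s - \<zeta>))" "0 < Re ((z - \<zeta>) / (\<gamma> t - \<zeta>))"
        using that by (auto intro!: Re_pos simp: W_def r_def dist_commute)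
      from Ln_divide_shift[OF this ex im] show ?thesis by (simp add: algebra_simps)
    qed
    ultimately show "\<forall>\<^sub>F z in nhds (\<gamma> s).
        q s + Ln ((z - \<zeta>) / (\<gamma> s - \<zeta>)) = q t + Ln ((z - \<zeta>) / (\<gamma> t - \<zeta>))"
      unfolding eventually_nhds by blast
  qed
  ultimately show "\<exists>r>0. (\<lambda>z. q t + Ln ((z - \<zeta>) / (\<gamma> t - \<zeta>))) holomorphic_on ball (\<gamma> t) r \<and>
      (\<exists>\<delta>>0. \<forall>s\<in>{0..1}. \<bar>s - t\<bar> < \<delta> \<longrightarrow> \<gamma> s \<in> ball (\<gamma> t) r \<and>
        (\<forall>\<^sub>F z in nhds (\<gamma> s). q s + Ln ((z - \<zeta>) / (\<gamma> s - \<zeta>)) = q t + Ln ((z - \<zeta>) / (\<gamma> t - \<zeta>))))"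
    using r0 d1(1) d2(1) by (intro exI[of _ r] conjI exI[of _ "min d1 d2"]) auto
qed

lemma ancont_along_holomorphic_power:
  assumes pg: "path \<gamma>" and f: "ancont_along \<gamma> f" and V: "open V" "path_image \<gamma> \<subseteq> V"
    and hA: "A holomorphic_on V" and hB: "B holomorphic_on V"
  shows "ancont_along \<gamma> (\<lambda>t z. A z + B z * f t z ^ e)"
  unfolding ancont_along_def
proof (intro ballI)
  fix t :: real assume t: "t \<in> {0..1}"
  obtain r \<delta> where r: "r > 0" "f t holomorphic_on ball (\<gamma> t) r" "\<delta> > 0"
    and near: "\<And>s. s \<in> {0..1} \<Longrightarrow> \<bar>s - t\<bar> < \<delta> \<Longrightarrow> \<forall>\<^sub>F z in nhds (\<gamma> s). f s z = f t z"
    using f t unfolding ancont_along_def by meson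
  obtain e0 where e0: "e0 > 0" "ball (\<gamma> t) e0 \<subseteq> V"
    using V t openE unfolding path_image_def by blast
  define r' where "r' = min r e0"
  have r': "r' > 0" "ball (\<gamma> t) r' \<subseteq> ball (\<gamma> t) r" "ball (\<gamma> t) r' \<subseteq> V"
    using r e0 by (auto simp: r'_def)
  obtain d1 where d1: "d1 > 0" "\<And>s. s \<in> {0..1} \<Longrightarrow> dist s t < d1 \<Longrightarrow> dist (\<gamma> s) (\<gamma> t) < r'"
    using pg t r' unfolding path_def continuous_on_iff by metis
  have "(\<lambda>z. A z + B z * f t z ^ e) holomorphic_on ball (\<gamma> t) r'"
    using holomorphic_on_subset[OF hA r'(3)] holomorphic_on_subset[OF hB r'(3)]
      holomorphic_on_subset[OF r(2) r'(2)]
    by (intro holomorphic_intros)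
  moreover have "\<gamma> s \<in> ball (\<gamma> t) r' \<and>
      (\<forall>\<^sub>F z in nhds (\<gamma> s). A z + B z * f s z ^ e = A z + B z * f t z ^ e)"
    if "s \<in> {0..1}" "\<bar>s - t\<bar> < min \<delta> d1" for s
    using d1(2)[of s] near[of s] that
    by (auto simp: dist_real_def dist_commute elim: eventually_mono)
  ultimately show "\<exists>r>0. (\<lambda>z. A z + B z * f t z ^ e) holomorphic_on ball (\<gamma> t) r \<and>
      (\<exists>\<delta>>0. \<forall>s\<in>{0..1}. \<bar>s - t\<bar> < \<delta> \<longrightarrow> \<gamma> s \<in> ball (\<gamma> t) r \<and>
        (\<forall>\<^sub>F z in nhds (\<gamma> s). A z + B z * f s z ^ e = A z + B z * f t z ^ e))"
    using r'(1) r(3) d1(1) by (intro exI[of _ r'] conjI exI[of _ "min \<delta> d1"]) auto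
qed

lemma ancont_along_common_radius:
  assumes "ancont_along \<gamma> f" "ancont_along \<gamma> g" "t \<in> {0..1}"
  obtains r d where "r > 0" "d > 0" "f t holomorphic_on ball (\<gamma> t) r" "g t holomorphic_on ball (\<gamma> t) r"
    "\<And>s. s \<in> {0..1} \<Longrightarrow> \<bar>s - t\<bar> < d \<Longrightarrow> \<gamma> s \<in> ball (\<gamma> t) r \<and>
       (\<forall>\<^sub>F z in nhds (\<gamma> s). f s z = f t z) \<and> (\<forall>\<^sub>F z in nhds (\<gamma> s). g s z = g t z)"
proof -
  obtain rf df where f: "rf > 0" "f t holomorphic_on ball (\<gamma> t) rf" "df > 0"
    "\<And>s. s \<in> {0..1} \<Longrightarrow> \<bar>s - t\<bar> < df \<Longrightarrow> \<gamma> s \<in> ball (\<gamma> t) rf \<and> (\<forall>\<^sub>F z in nhds (\<gamma> s). f s z = f t z)"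
    using assms(1,3) unfolding ancont_along_def by meson
  obtain rg dg where g: "rg > 0" "g t holomorphic_on ball (\<gamma> t) rg" "dg > 0"
    "\<And>s. s \<in> {0..1} \<Longrightarrow> \<bar>s - t\<bar> < dg \<Longrightarrow> \<gamma> s \<in> ball (\<gamma> t) rg \<and> (\<forall>\<^sub>F z in nhds (\<gamma> s). g s z = g t z)"
    using assms(2,3) unfolding ancont_along_def by meson
  show ?thesis
  proof (rule that[of "min rf rg" "min df dg"])
    show "f t holomorphic_on ball (\<gamma> t) (min rf rg)" "g t holomorphic_on ball (\<gamma> t) (min rf rg)"
      using f(2) g(2) by (auto elim!: holomorphic_on_subset)
  qed (use f g in auto)
qed

text \<open>The set of parameters at which the two continuations have the same germ is open and
  closed in [0, 1], by the identity theorem on the discs of the function elements.\<close>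
lemma ancont_along_unique:
  assumes af: "ancont_along \<gamma> f" and ag: "ancont_along \<gamma> g"
    and start: "\<forall>\<^sub>F z in nhds (\<gamma> 0). f 0 z = g 0 z"
  shows "\<forall>\<^sub>F z in nhds (\<gamma> 1). f 1 z = g 1 z"
proof -
  define P where "P = (\<lambda>t. \<forall>\<^sub>F z in nhds (\<gamma> t). f t z = g t z)"
  have "P 1"
  proof (rule connected_induction_simple[of "{0..1::real}" 0 1 P])
    show "P 0" using start by (simp add: P_def)
    fix t :: real assume t: "t \<in> {0..1}"
    obtain r d where rd: "r > 0" "d > 0" "f t holomorphic_on ball (\<gamma> t) r" "g t holomorphic_on ball (\<gamma> t) r"
      and near: "\<And>s. s \<in> {0..1} \<Longrightarrow> \<bar>s - t\<bar> < d \<Longrightarrow> \<gamma> s \<in> ball (\<gamma> t) r \<and>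
         (\<forall>\<^sub>F z in nhds (\<gamma> s). f s z = f t z) \<and> (\<forall>\<^sub>F z in nhds (\<gamma> s). g s z = g t z)"
      using ancont_along_common_radius[OF af ag t] by blast
    have P_iff: "P s \<longleftrightarrow> (\<forall>z\<in>ball (\<gamma> t) r. f t z = g t z)" if s: "s \<in> {0..1} \<inter> ball t d" for s
    proof
      have ns: "\<gamma> s \<in> ball (\<gamma> t) r" "\<forall>\<^sub>F z in nhds (\<gamma> s). f s z = f t z" "\<forall>\<^sub>F z in nhds (\<gamma> s). g s z = g t z"
        using near[of s] s by (auto simp: dist_real_def abs_minus_commute)
      show "\<forall>z\<in>ball (\<gamma> t) r. f t z = g t z" if "P s"
      proof -
        have "\<forall>\<^sub>F z in nhds (\<gamma> s). f t z = g t z"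
          using that ns(2,3) unfolding P_def by eventually_elim auto
        then obtain S where S: "open S" "\<gamma> s \<in> S" "\<forall>z\<in>S. f t z = g t z"
          unfolding eventually_nhds by blast
        show ?thesis
        proof
          fix z assume "z \<in> ball (\<gamma> t) r"
          show "f t z = g t z"
            by (rule analytic_continuation_open[of "S \<inter> ball (\<gamma> t) r" "ball (\<gamma> t) r" "f t" "g t"])
              (use S ns(1) rd(3,4) \<open>z \<in> ball (\<gamma> t) r\<close> in auto)
        qed
      qed
      show "P s" if "\<forall>z\<in>ball (\<gamma> t) r. f t z = g t z"
      proof -
        have "\<forall>\<^sub>F z in nhds (\<gamma> s). f t z = g t z"
          using that ns(1) unfolding eventually_nhds by (intro exI[of _ "ball (\<gamma> t) r"]) auto
        with ns(2,3) show ?thesis unfolding P_def by eventually_elim auto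
      qed
    qed
    show "\<exists>T. openin (top_of_set {0..1}) T \<and> t \<in> T \<and> (\<forall>x\<in>T. \<forall>y\<in>T. P x \<longrightarrow> P y)"
    proof (intro exI[of _ "{0..1} \<inter> ball t d"] conjI ballI impI)
      show "t \<in> {0..1} \<inter> ball t d" using t rd(2) by simp
      show "P y" if "x \<in> {0..1} \<inter> ball t d" "y \<in> {0..1} \<inter> ball t d" "P x" for x y
        using P_iff that by blast
    qed auto
  qed auto
  then show ?thesis by (simp add: P_def)
qed

lemma holomorphic_eq_nhds_if_eq_within_UHP:
  assumes hf: "f holomorphic_on ball c r" and hg: "g holomorphic_on ball c r" and r: "r > 0"
    and c: "Im c = 0" and ev: "\<forall>\<^sub>F z in at c within UHP. f z = g z"
  shows "\<forall>\<^sub>F z in nhds c. f z = g z"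
proof -
  obtain d where d: "d > 0" "\<forall>x\<in>UHP. x \<noteq> c \<and> dist x c < d \<longrightarrow> f x = g x"
    using ev unfolding eventually_at by blast
  define U where "U = ball c (min d r) \<inter> UHP"
  have "c islimpt U"
    unfolding islimpt_approachable
  proof (intro allI impI)
    fix \<epsilon> :: real assume "\<epsilon> > 0"
    define h where "h = min \<epsilon> (min d r) / 2"
    have h: "h > 0" "h < \<epsilon>" "h < min d r" using \<open>\<epsilon> > 0\<close> d r by (auto simp: h_def)
    then show "\<exists>x'\<in>U. x' \<noteq> c \<and> dist x' c < \<epsilon>"
      using c by (intro bexI[of _ "c + \<i> * of_real h"]) (auto simp: U_def UHP_def dist_norm norm_mult)
  qed
  have "f z - g z = 0" if "z \<in> ball c r" for z
  proof (rule analytic_continuation[of "\<lambda>z. f z - g z" "ball c r" U c z])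
    show "(\<lambda>z. f z - g z) holomorphic_on ball c r" using hf hg by (intro holomorphic_intros)
    show "f w - g w = 0" if "w \<in> U" for w
      using that c d by (auto simp: U_def UHP_def dist_commute)
  qed (use that r \<open>c islimpt U\<close> in \<open>auto simp: U_def\<close>)
  then show ?thesis
    unfolding eventually_nhds using r by (intro exI[of _ "ball c r"]) auto
qed

lemma monodromy_isI:
  assumes "path \<gamma>" "\<gamma> 0 = -1" "\<gamma> 1 = -1"
    and h: "\<And>i. i < n \<Longrightarrow> ancont_along \<gamma> (h i) \<and>
        (\<forall>\<^sub>F z in at (-1) within UHP. h i 0 z = F i z) \<and>
        (\<forall>\<^sub>F z in at (-1) within UHP. h i 1 z = (\<Sum>l<n. M i l * F l z))"
  shows "monodromy_is \<gamma> n F M"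
  unfolding monodromy_is_def
proof (intro allI impI conjI)
  fix i assume "i < n"
  then show "\<exists>f. ancont_along \<gamma> f \<and> (\<forall>\<^sub>F z in at (-1) within UHP. f 0 z = F i z)"
    using h by blast
next
  fix i f assume i: "i < n" and f: "ancont_along \<gamma> f \<and> (\<forall>\<^sub>F z in at (-1) within UHP. f 0 z = F i z)"
  obtain r where r: "r > 0" "f 0 holomorphic_on ball (\<gamma> 0) r" "h i 0 holomorphic_on ball (\<gamma> 0) r"
    using ancont_along_common_radius[of \<gamma> f "h i" 0] f h[OF i]
    by (metis atLeastAtMost_iff order_refl zero_le_one)
  have "\<forall>\<^sub>F z in at (-1) within UHP. f 0 z = h i 0 z"
    using conjunct2[OF f] conjunct1[OF conjunct2[OF h[OF i]]] by eventually_elim simp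
  then have "\<forall>\<^sub>F z in nhds (\<gamma> 0). f 0 z = h i 0 z"
    using r \<open>\<gamma> 0 = -1\<close> by (intro holomorphic_eq_nhds_if_eq_within_UHP) simp_all
  then have "\<forall>\<^sub>F z in nhds (-1). f 1 z = h i 1 z"
    using ancont_along_unique f h[OF i] \<open>\<gamma> 1 = -1\<close> by metis
  then have "\<forall>\<^sub>F z in at (-1) within UHP. f 1 z = h i 1 z"
    by (simp add: eventually_at_filter eventually_mono)
  with conjunct2[OF conjunct2[OF h[OF i]]]
  show "\<forall>\<^sub>F z in at (-1) within UHP. f 1 z = (\<Sum>l<n. M i l * F l z)"
    by eventually_elim simp
qed

lemma continuous_log_along_loop:
  assumes "path \<gamma>" "\<zeta> \<notin> path_image \<gamma>" and c: "exp c = \<sigma> * (\<gamma> 0 - \<zeta>)"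
  obtains q where "continuous_on {0..1} q" "\<And>t. t \<in> {0..1} \<Longrightarrow> exp (q t) = \<sigma> * (\<gamma> t - \<zeta>)"
    "q 0 = c" "q 1 = c + 2 * pi * \<i> * winding_number \<gamma> \<zeta>"
proof -
  obtain p where p: "path p" "pathfinish p - pathstart p = 2 * of_real pi * \<i> * winding_number \<gamma> \<zeta>"
    and pe: "\<And>t. t \<in> {0..1} \<Longrightarrow> \<gamma> t = \<zeta> + exp (p t)"
    using winding_number_as_continuous_log[OF assms(1,2)] by blast
  show ?thesis
  proof (rule that[of "\<lambda>t. p t - p 0 + c"])
    show "continuous_on {0..1} (\<lambda>t. p t - p 0 + c)"
      using p(1) unfolding path_def by (intro continuous_intros)
    show "exp (p t - p 0 + c) = \<sigma> * (\<gamma> t - \<zeta>)" if "t \<in> {0..1}" for t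
      using pe[OF that] pe[of 0] c by (simp add: exp_add exp_diff)
    show "p 1 - p 0 + c = c + 2 * pi * \<i> * winding_number \<gamma> \<zeta>"
      using p(2) by (simp add: pathstart_def pathfinish_def algebra_simps)
  qed simp
qed

text \<open>Members A_i + B_i (log w)^(e_i), w = \<sigma> (z - \<zeta>), continue along a loop winding once
  around \<zeta> by replacing the branch lg of log w at the base point with lg + 2\<pi>i.\<close>
lemma monodromy_is_log_power_family:
  fixes A B :: "nat \<Rightarrow> complex \<Rightarrow> complex" and e :: "nat \<Rightarrow> nat"
  assumes \<gamma>: "path \<gamma>" "\<gamma> 0 = -1" "\<gamma> 1 = -1" "\<zeta> \<notin> path_image \<gamma>" "winding_number \<gamma> \<zeta> = 1"
    and V: "open V" "path_image \<gamma> \<subseteq> V"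
      "\<And>i. i < n \<Longrightarrow> A i holomorphic_on V" "\<And>i. i < n \<Longrightarrow> B i holomorphic_on V"
    and c: "exp c = \<sigma> * (-1 - \<zeta>)"
    and branch: "\<forall>\<^sub>F z in at (-1) within UHP. c + Ln ((z - \<zeta>) / (-1 - \<zeta>)) = lg z"
    and start: "\<And>i. i < n \<Longrightarrow> \<forall>\<^sub>F z in at (-1) within UHP. A i z + B i z * lg z ^ e i = F i z"
    and finish: "\<And>i. i < n \<Longrightarrow> \<forall>\<^sub>F z in at (-1) within UHP.
        A i z + B i z * (lg z + 2 * pi * \<i>) ^ e i = (\<Sum>l<n. M i l * F l z)"
  shows "monodromy_is \<gamma> n F M"
proof -
  obtain q where q: "continuous_on {0..1} q" "\<And>t. t \<in> {0..1} \<Longrightarrow> exp (q t) = \<sigma> * (\<gamma> t - \<zeta>)"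
    "q 0 = c" "q 1 = c + 2 * pi * \<i>"
    using continuous_log_along_loop[of \<gamma> \<zeta> c \<sigma>] \<gamma> c by auto
  define log_elem where "log_elem = (\<lambda>t z. q t + Ln ((z - \<zeta>) / (\<gamma> t - \<zeta>)))"
  have log_elem: "ancont_along \<gamma> log_elem"
    unfolding log_elem_def using \<gamma>(1) q(1,2) by (rule ancont_along_local_log)
  show ?thesis
  proof (rule monodromy_isI[OF \<gamma>(1-3), of n "\<lambda>i t z. A i z + B i z * log_elem t z ^ e i"])
    fix i assume i: "i < n"
    have lg: "\<forall>\<^sub>F z in at (-1) within UHP. log_elem 0 z = lg z \<and> log_elem 1 z = lg z + 2 * pi * \<i>"
      using branch by eventually_elim (simp add: log_elem_def q(3,4) \<gamma>(2,3) algebra_simps)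
    have "\<forall>\<^sub>F z in at (-1) within UHP. A i z + B i z * log_elem 0 z ^ e i = F i z"
      using lg start[OF i] by eventually_elim simp
    moreover have "\<forall>\<^sub>F z in at (-1) within UHP. A i z + B i z * log_elem 1 z ^ e i = (\<Sum>l<n. M i l * F l z)"
      using lg finish[OF i] by eventually_elim simp
    moreover have "ancont_along \<gamma> (\<lambda>t z. A i z + B i z * log_elem t z ^ e i)"
      using \<gamma>(1) log_elem V(1,2) V(3,4)[OF i] by (rule ancont_along_holomorphic_power)
    ultimately show "ancont_along \<gamma> (\<lambda>t z. A i z + B i z * log_elem t z ^ e i) \<and>
        (\<forall>\<^sub>F z in at (-1) within UHP. A i z + B i z * log_elem 0 z ^ e i = F i z) \<and>
        (\<forall>\<^sub>F z in at (-1) within UHP. A i z + B i z * log_elem 1 z ^ e i = (\<Sum>l<n. M i l * F l z))"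
      by blast
  qed
qed

lemma eventually_at_minus_one_within_UHP:
  "\<forall>\<^sub>F z in at (-1) within UHP. 0 < Im z \<and> Re z < 0"
proof -
  have "0 < Im z \<and> Re z < 0" if "z \<in> UHP" "dist z (-1) < 1" for z
    using that abs_Re_le_cmod[of "z + 1"] by (auto simp: UHP_def dist_norm)
  then show ?thesis unfolding eventually_at by (intro exI[of _ 1]) auto
qed

section \<open>Slit planes and a second branch of the logarithm\<close>

definition ray_ge1 :: "complex set" where
  "ray_ge1 = {z. z \<in> \<real> \<and> 1 \<le> Re z}"

definition ray_down :: "complex set" where
  "ray_down = {z. Re z = 0 \<and> Im z \<le> 0}"

lemma notin_ray_ge1_iff: "z \<notin> ray_ge1 \<longleftrightarrow> Im z \<noteq> 0 \<or> Re z < 1"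
  by (auto simp: ray_ge1_def complex_is_Real_iff)

lemma notin_ray_down_iff: "z \<notin> ray_down \<longleftrightarrow> Re z \<noteq> 0 \<or> 0 < Im z"
  by (auto simp: ray_down_def)

lemma open_Compl_ray_ge1: "open (- ray_ge1)"
proof -
  have "- ray_ge1 = {z. Im z < 0} \<union> {z. 0 < Im z} \<union> {z. Re z < 1}"
    by (auto simp: ray_ge1_def complex_is_Real_iff)
  then show ?thesis
    by (simp add: open_Un open_halfspace_Im_lt open_halfspace_Im_gt open_halfspace_Re_lt)
qed

lemma open_Compl_ray_down: "open (- ray_down)"
proof -
  have "- ray_down = {z. Re z < 0} \<union> {z. 0 < Re z} \<union> {z. 0 < Im z}"
    by (auto simp: ray_down_def)
  then show ?thesis
    by (simp add: open_Un open_halfspace_Re_lt open_halfspace_Re_gt open_halfspace_Im_gt)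
qed

lemma starlike_Compl_ray_ge1: "starlike (- ray_ge1)"
  unfolding starlike_def
proof (intro bexI[of _ 0] ballI subsetI)
  fix x y assume x: "x \<in> - ray_ge1" and "y \<in> closed_segment 0 x"
  then obtain u where u: "0 \<le> u" "u \<le> 1" "y = u *\<^sub>R x" by (auto simp: closed_segment_def)
  have "u * Re x < 1" if "Re x < 1"
    using u that by (cases "Re x \<le> 0") (auto intro: order.strict_trans1[OF mult_left_le_one_le]
        simp: mult_nonneg_nonpos order.strict_trans1[of _ 0 1])
  then show "y \<in> - ray_ge1" using x u by (cases "u = 0") (auto simp: notin_ray_ge1_iff)
qed (simp add: notin_ray_ge1_iff)

lemma starlike_Compl_ray_down: "starlike (- ray_down)"
  unfolding starlike_def
proof (intro bexI[of _ \<i>] ballI subsetI)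
  fix x y assume x: "x \<in> - ray_down" and "y \<in> closed_segment \<i> x"
  then obtain u where u: "0 \<le> u" "u \<le> 1" "y = (1 - u) *\<^sub>R \<i> + u *\<^sub>R x"
    by (auto simp: closed_segment_def)
  have "0 < (1 - u) + u * Im x" if "0 < Im x" using u that
    by (cases "u = 1") (auto intro: add_nonneg_pos add_pos_nonneg)
  then show "y \<in> - ray_down" using x u by (auto simp: notin_ray_down_iff)
qed (simp add: notin_ray_down_iff)

lemma connected_Un_common_point:
  "connected S \<Longrightarrow> connected T \<Longrightarrow> x \<in> S \<Longrightarrow> x \<in> T \<Longrightarrow> connected (S \<union> T)"
  by (rule connected_Un) auto

lemma connected_Compl_rays: "connected (- ray_ge1 - ray_down)"
proof -
  have "connected ({z. Re z < 0} \<union> {z. 0 < Im z})"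
    by (rule connected_Un_common_point[of _ _ "-1 + \<i>"])
      (auto intro: convex_connected convex_halfspace_Re_lt convex_halfspace_Im_gt)
  then have "connected (({z. Re z < 0} \<union> {z. 0 < Im z}) \<union> ({z. 0 < Re z} \<inter> {z. Re z < 1}))"
    by (rule connected_Un_common_point[of _ _ "1/2 + \<i>"])
      (auto intro: convex_connected convex_Int convex_halfspace_Re_gt convex_halfspace_Re_lt)
  then have "connected (({z. Re z < 0} \<union> {z. 0 < Im z}) \<union> ({z. 0 < Re z} \<inter> {z. Re z < 1}) \<union>
      ({z. Im z < 0} \<inter> {z. 0 < Re z}))"
    by (rule connected_Un_common_point[of _ _ "1/2 - \<i>"])
      (auto intro: convex_connected convex_Int convex_halfspace_Im_lt convex_halfspace_Re_gt)
  moreover have "({z. Re z < 0} \<union> {z. 0 < Im z}) \<union> ({z. 0 < Re z} \<inter> {z. Re z < 1}) \<union>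
      ({z. Im z < 0} \<inter> {z. 0 < Re z}) = - ray_ge1 - ray_down"
    by (auto simp: ray_ge1_def ray_down_def complex_is_Real_iff)
  ultimately show ?thesis by simp
qed

text \<open>A logarithm cut along ray_down, hence single valued along Z_1, which passes above 0.\<close>
definition Ln_down :: "complex \<Rightarrow> complex" where
  "Ln_down z = Ln (- \<i> * z) + \<i> * of_real pi / 2"

lemma Ln_down_arg_notin_nonpos_Reals: "z \<notin> ray_down \<Longrightarrow> - \<i> * z \<notin> \<real>\<^sub>\<le>\<^sub>0"
  by (auto simp: complex_nonpos_Reals_iff ray_down_def)

lemma holomorphic_on_Ln_down: "Ln_down holomorphic_on - ray_down"
  unfolding Ln_down_def by (intro holomorphic_intros) (auto dest: Ln_down_arg_notin_nonpos_Reals)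

lemma has_field_derivative_Ln_down:
  assumes "z \<notin> ray_down"
  shows "(Ln_down has_field_derivative 1 / z) (at z)"
proof -
  have "z \<noteq> 0" using assms by (auto simp: ray_down_def)
  have "((\<lambda>z. Ln (- \<i> * z) + \<i> * of_real pi / 2) has_field_derivative inverse (- \<i> * z) * (- \<i>) + 0) (at z)"
    by (rule derivative_eq_intros refl | use Ln_down_arg_notin_nonpos_Reals[OF assms] in auto)+
  then show ?thesis using \<open>z \<noteq> 0\<close> by (simp add: Ln_down_def[abs_def] field_simps)
qed

lemma Ln_down_1 [simp]: "Ln_down 1 = 0"
  by (simp add: Ln_down_def)

lemma Ln_down_eq_Ln:
  assumes "0 < Im z"
  shows "Ln_down z = Ln z"
proof (rule Ln_unique[symmetric])
  have "z \<noteq> 0" using assms by auto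
  then have "exp (Ln_down z) = - \<i> * z * exp (\<i> * of_real pi / 2)"
    by (simp add: Ln_down_def exp_add)
  also have "exp (\<i> * of_real pi / 2) = \<i>"
    by (simp add: exp_eq_polar cis_conv_exp[symmetric] complex_eq_iff)
  finally show "exp (Ln_down z) = z" by (simp add: mult.commute)
  have "0 < Re (- \<i> * z)" using assms by simp
  then have "\<bar>Im (Ln (- \<i> * z))\<bar> < pi / 2" by (rule Re_Ln_pos_lt_imp)
  then show "- pi < Im (Ln_down z)" "Im (Ln_down z) \<le> pi" by (auto simp: Ln_down_def)
qed

section \<open>Polylogarithms\<close>

definition polylog_coeff :: "nat \<Rightarrow> nat \<Rightarrow> complex" where
  "polylog_coeff j n = (if n = 0 then 0 else 1 / of_nat n ^ j)"

definition polylog :: "nat \<Rightarrow> complex \<Rightarrow> complex" where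
  "polylog j z = (\<Sum>n. polylog_coeff j n * z ^ n)"

definition polylog_jump :: "nat \<Rightarrow> complex \<Rightarrow> complex" where
  "polylog_jump j z = Ln_down z ^ (j - 1) / of_nat (fact (j - 1))"

lemma norm_polylog_coeff_le_1: "norm (polylog_coeff j n) \<le> 1"
proof (cases "n = 0")
  case False
  then have "1 \<le> real n ^ j" by (simp add: one_le_power)
  then show ?thesis using False by (simp add: polylog_coeff_def norm_divide norm_power)
qed (simp add: polylog_coeff_def)

lemma summable_polylog_coeff:
  assumes "norm z < 1"
  shows "summable (\<lambda>n. polylog_coeff j (n + p) * z ^ n)"
proof (rule summable_comparison_test)
  show "\<exists>N. \<forall>n\<ge>N. norm (polylog_coeff j (n + p) * z ^ n) \<le> norm z ^ n"
    using norm_polylog_coeff_le_1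
    by (auto simp: norm_mult norm_power intro!: mult_left_le_one_le)
  show "summable (\<lambda>n. norm z ^ n)" using assms by simp
qed

lemma polylog_0 [simp]: "polylog j 0 = 0"
  by (simp add: polylog_def polylog_coeff_def)

lemma polylog_1: "norm z < 1 \<Longrightarrow> polylog 1 z = - Ln (1 - z)"
proof -
  assume z: "norm z < 1"
  have "(\<lambda>n. - ((- (- z)) ^ n) / of_nat n) sums ln (1 + - z)"
    by (rule Ln_series') (use z in simp)
  then have "(\<lambda>n. - (- (z ^ n) / of_nat n)) sums - Ln (1 - z)"
    by (intro sums_minus) simp
  moreover have "(\<lambda>n. - (- (z ^ n) / of_nat n)) = (\<lambda>n. polylog_coeff 1 n * z ^ n)"
    by (auto simp: polylog_coeff_def fun_eq_iff)
  ultimately show ?thesis unfolding polylog_def by (simp add: sums_iff)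
qed

lemma has_field_derivative_polylog_Suc:
  assumes "norm z < 1"
  shows "(polylog (Suc j) has_field_derivative (\<Sum>n. polylog_coeff j (Suc n) * z ^ n)) (at z)"
proof -
  have "diffs (polylog_coeff (Suc j)) = (\<lambda>n. polylog_coeff j (Suc n))"
    by (simp add: fun_eq_iff diffs_def polylog_coeff_def field_simps del: of_nat_Suc)
  moreover have "((\<lambda>z. \<Sum>n. polylog_coeff (Suc j) n * z ^ n) has_field_derivative
      (\<Sum>n. diffs (polylog_coeff (Suc j)) n * z ^ n)) (at z)"
    by (rule termdiffs_strong'[of 1]) (use summable_polylog_coeff[of _ _ 0] assms in auto)
  ultimately show ?thesis unfolding polylog_def[abs_def] by simp
qed

lemma polylog_eq_mult:
  assumes "norm z < 1"
  shows "polylog j z = z * (\<Sum>n. polylog_coeff j (Suc n) * z ^ n)"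
proof -
  have "polylog j z = (\<Sum>n. polylog_coeff j (Suc n) * z ^ Suc n)"
    using suminf_split_head[OF summable_polylog_coeff[OF assms, of j 0]]
    by (simp add: polylog_def polylog_coeff_def)
  also have "\<dots> = (\<Sum>n. z * (polylog_coeff j (Suc n) * z ^ n))"
    by (simp add: mult_ac)
  also have "\<dots> = z * (\<Sum>n. polylog_coeff j (Suc n) * z ^ n)"
    by (rule suminf_mult) (use summable_polylog_coeff[OF assms, of j 1] in simp)
  finally show ?thesis .
qed

lemma one_minus_notin_nonpos_Reals: "z \<notin> ray_ge1 \<Longrightarrow> 1 - z \<notin> \<real>\<^sub>\<le>\<^sub>0"
  by (auto simp: notin_ray_ge1_iff complex_nonpos_Reals_iff)

lemma holomorphic_on_polylog_jump: "polylog_jump j holomorphic_on - ray_down"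
  unfolding polylog_jump_def[abs_def] using holomorphic_on_Ln_down by (intro holomorphic_intros) auto

lemma has_field_derivative_polylog_jump_Suc:
  assumes "1 \<le> j" "x \<notin> ray_down"
  shows "(polylog_jump (Suc j) has_field_derivative polylog_jump j x / x) (at x)"
proof -
  have "((\<lambda>z. Ln_down z ^ j / of_nat (fact j)) has_field_derivative
      of_nat j * (1 / x * Ln_down x ^ (j - Suc 0)) / of_nat (fact j)) (at x)"
    by (intro DERIV_cdivide DERIV_power has_field_derivative_Ln_down assms(2))
  moreover have "(fact j :: nat) = j * fact (j - 1)"
    using assms(1) fact_reduce[of j, where 'a = nat] by simp
  then have "of_nat j * (1 / x * Ln_down x ^ (j - Suc 0)) / of_nat (fact j) = polylog_jump j x / x"
    using assms(1) by (simp add: polylog_jump_def field_simps)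
  ultimately show ?thesis by (simp add: polylog_jump_def[abs_def])
qed

lemma holomorphic_starlike_has_primitive:
  assumes "f holomorphic_on S" "starlike S" "open S"
  obtains g where "\<And>x. x \<in> S \<Longrightarrow> (g has_field_derivative f x) (at x)"
proof -
  have "\<exists>g. \<forall>x\<in>S. (g has_field_derivative f x) (at x)"
    using assms holomorphic_on_imp_differentiable_at
    by (intro holomorphic_starlike_primitive[of S f "{}"]) (auto intro: holomorphic_on_imp_continuous_on)
  then show ?thesis using that by blast
qed

text \<open>Li_(j+1) is the primitive of Li_j(z)/z vanishing at 0.\<close>
lemma polylog_Suc_continuation:
  assumes hG: "G holomorphic_on - ray_ge1" and sG: "\<forall>z\<in>ball 0 1. G z = polylog j z"
  obtains G' where "G' holomorphic_on - ray_ge1" "\<forall>z\<in>ball 0 1. G' z = polylog (Suc j) z"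
    "\<And>x. x \<in> - ray_ge1 \<Longrightarrow> x \<noteq> 0 \<Longrightarrow> (G' has_field_derivative G x / x) (at x)"
proof -
  have G0: "G 0 = 0" using sG by simp
  define F where "F = (\<lambda>z. if z = 0 then deriv G 0 else (G z - G 0) / (z - 0))"
  have hF: "F holomorphic_on - ray_ge1"
    unfolding F_def by (rule pole_lemma_open[OF hG open_Compl_ray_ge1])
  obtain H where H: "\<And>x. x \<in> - ray_ge1 \<Longrightarrow> (H has_field_derivative F x) (at x)"
    using holomorphic_starlike_has_primitive[OF hF starlike_Compl_ray_ge1 open_Compl_ray_ge1] by blast
  define G' where "G' = (\<lambda>z. H z - H 0)"
  have dG': "(G' has_field_derivative F x) (at x)" if "x \<in> - ray_ge1" for x
    unfolding G'_def using H that by (auto intro!: derivative_eq_intros)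
  have F: "F x = G x / x" if "x \<noteq> 0" for x using that G0 by (simp add: F_def)
  have ball: "ball 0 1 \<subseteq> - ray_ge1"
  proof
    fix z :: complex assume "z \<in> ball 0 1"
    then have "Re z < 1" using complex_Re_le_cmod[of z] by simp
    then show "z \<in> - ray_ge1" by (simp add: notin_ray_ge1_iff)
  qed
  have "G' z = polylog (Suc j) z" if z: "z \<in> ball 0 1" for z
  proof -
    have d: "((\<lambda>z. G' z - polylog (Suc j) z) has_field_derivative
        F x - (\<Sum>n. polylog_coeff j (Suc n) * x ^ n)) (at x)" if "x \<in> ball 0 1" for x
      using dG'[of x] has_field_derivative_polylog_Suc[of x j] ball that
      by (auto intro!: derivative_eq_intros)
    have "F x - (\<Sum>n. polylog_coeff j (Suc n) * x ^ n) = 0" if "x \<in> ball 0 1 - {0}" for x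
      using that F[of x] sG polylog_eq_mult[of x j] by (auto simp: field_simps)
    with d have "\<forall>x\<in>ball 0 1 - {0}. ((\<lambda>z. G' z - polylog (Suc j) z) has_field_derivative 0) (at x)"
      by fastforce
    moreover have "continuous_on (ball 0 1) (\<lambda>z. G' z - polylog (Suc j) z)"
      using d by (meson DERIV_isCont continuous_at_imp_continuous_on)
    ultimately obtain c where "\<And>x. x \<in> ball 0 1 \<Longrightarrow> G' x - polylog (Suc j) x = c"
      using DERIV_zero_connected_constant[of "ball (0::complex) 1" "{0}"] by auto
    moreover from this[of 0] have "c = 0" by (simp add: G'_def)
    ultimately show ?thesis using z by auto
  qed
  moreover have "G' holomorphic_on - ray_ge1"
    using dG' open_Compl_ray_ge1 by (auto simp: holomorphic_on_open)
  moreover have "(G' has_field_derivative G x / x) (at x)" if "x \<in> - ray_ge1" "x \<noteq> 0" for x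
    using dG'[OF that(1)] F[OF that(2)] by simp
  ultimately show ?thesis by (intro that) auto
qed

lemma polylog_jump_Suc_continuation:
  assumes j: "1 \<le> j" and hP: "\<Phi> holomorphic_on - ray_down"
    and eP: "\<forall>z\<in>- ray_ge1 - ray_down. \<Phi> z = G z + polylog_jump j z * Ln (1 - z)"
    and dG': "\<And>x. x \<in> - ray_ge1 \<Longrightarrow> x \<noteq> 0 \<Longrightarrow> (G' has_field_derivative G x / x) (at x)"
  obtains \<Phi>' where "\<Phi>' holomorphic_on - ray_down"
    "\<forall>z\<in>- ray_ge1 - ray_down. \<Phi>' z = G' z + polylog_jump (Suc j) z * Ln (1 - z)"
proof -
  define J where "J = polylog_jump (Suc j)"
  have J1: "J 1 = 0" using j by (simp add: J_def polylog_jump_def)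
  define Q where "Q = (\<lambda>z. if z = 1 then deriv J 1 else (J z - J 1) / (z - 1))"
  have "Q holomorphic_on - ray_down"
    unfolding Q_def J_def by (rule pole_lemma_open[OF holomorphic_on_polylog_jump open_Compl_ray_down])
  then have hI: "(\<lambda>z. \<Phi> z / z + Q z) holomorphic_on - ray_down"
    using hP by (intro holomorphic_intros) (auto simp: ray_down_def)
  obtain H where H: "\<And>x. x \<in> - ray_down \<Longrightarrow> (H has_field_derivative \<Phi> x / x + Q x) (at x)"
    using holomorphic_starlike_has_primitive[OF hI starlike_Compl_ray_down open_Compl_ray_down] by blast
  have D: "((\<lambda>z. G' z + J z * Ln (1 - z) - H z) has_field_derivative 0) (at x)"
    if x: "x \<in> - ray_ge1 - ray_down" for x
  proof -
    have "x \<noteq> 0" "x \<noteq> 1" using x by (auto simp: ray_down_def ray_ge1_def)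
    have "((\<lambda>z. G' z + J z * Ln (1 - z) - H z) has_field_derivative
        G x / x + (polylog_jump j x / x * Ln (1 - x) + J x * (inverse (1 - x) * (0 - 1))) -
        (\<Phi> x / x + Q x)) (at x)"
      using dG'[of x] has_field_derivative_polylog_jump_Suc[OF j, of x] H[of x] x
        one_minus_notin_nonpos_Reals[of x] \<open>x \<noteq> 0\<close>
      by (auto simp: J_def intro!: derivative_eq_intros)
    moreover have "Q x = J x / (x - 1)" using \<open>x \<noteq> 1\<close> J1 by (simp add: Q_def)
    ultimately show ?thesis
      using eP x \<open>x \<noteq> 0\<close> \<open>x \<noteq> 1\<close> by (simp add: field_simps)
  qed
  have "open (- ray_ge1 - ray_down)"
    using open_Compl_ray_ge1 open_Compl_ray_down by (simp add: Diff_eq open_Int)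
  moreover have "continuous_on (- ray_ge1 - ray_down) (\<lambda>z. G' z + J z * Ln (1 - z) - H z)"
    using D by (meson DERIV_isCont continuous_at_imp_continuous_on)
  ultimately obtain c where c: "\<And>x. x \<in> - ray_ge1 - ray_down \<Longrightarrow> G' x + J x * Ln (1 - x) - H x = c"
    using DERIV_zero_connected_constant[OF connected_Compl_rays _ finite.emptyI] D by blast
  show ?thesis
  proof (rule that[of "\<lambda>z. H z + c"])
    have "((\<lambda>z. H z + c) has_field_derivative \<Phi> x / x + Q x) (at x)" if "x \<in> - ray_down" for x
      using H[OF that] by (auto intro!: derivative_eq_intros)
    then show "(\<lambda>z. H z + c) holomorphic_on - ray_down"
      using open_Compl_ray_down by (auto simp: holomorphic_on_open)
  qed (use c in \<open>force simp: J_def algebra_simps\<close>)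
qed

text \<open>G is Li_j on the plane cut along [1, \<infinity>); that G + polylog_jump j * Ln (1 - z) extends
  across the cut says that continuing Li_j once around 1 adds -2\<pi>i polylog_jump j.\<close>
lemma polylog_continuations:
  assumes "1 \<le> j"
  shows "\<exists>G \<Phi>. G holomorphic_on - ray_ge1 \<and> (\<forall>z\<in>ball 0 1. G z = polylog j z) \<and>
    \<Phi> holomorphic_on - ray_down \<and> (\<forall>z\<in>- ray_ge1 - ray_down. \<Phi> z = G z + polylog_jump j z * Ln (1 - z))"
  using assms
proof (induction j rule: nat_induct_at_least)
  case base
  show ?case
  proof (intro exI conjI)
    show "(\<lambda>z. - Ln (1 - z)) holomorphic_on - ray_ge1"
      by (intro holomorphic_intros) (auto dest: one_minus_notin_nonpos_Reals)
    show "\<forall>z\<in>ball 0 1. - Ln (1 - z) = polylog 1 z" using polylog_1 by simp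
    show "\<forall>z\<in>- ray_ge1 - ray_down. 0 = - Ln (1 - z) + polylog_jump 1 z * Ln (1 - z)"
      by (simp add: polylog_jump_def)
  qed simp
next
  case (Suc j)
  then obtain G \<Phi> where hG: "G holomorphic_on - ray_ge1" and sG: "\<forall>z\<in>ball 0 1. G z = polylog j z"
    and hP: "\<Phi> holomorphic_on - ray_down"
    and eP: "\<forall>z\<in>- ray_ge1 - ray_down. \<Phi> z = G z + polylog_jump j z * Ln (1 - z)"
    by blast
  obtain G' where G': "G' holomorphic_on - ray_ge1" "\<forall>z\<in>ball 0 1. G' z = polylog (Suc j) z"
    and dG': "\<And>x. x \<in> - ray_ge1 \<Longrightarrow> x \<noteq> 0 \<Longrightarrow> (G' has_field_derivative G x / x) (at x)"
    using polylog_Suc_continuation[OF hG sG] by blast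
  obtain \<Phi>' where "\<Phi>' holomorphic_on - ray_down"
    "\<forall>z\<in>- ray_ge1 - ray_down. \<Phi>' z = G' z + polylog_jump (Suc j) z * Ln (1 - z)"
    using polylog_jump_Suc_continuation[OF Suc.hyps hP eP dG'] by blast
  with G' show ?case by blast
qed

section \<open>The function Li*\<close>

definition Lstar_poly :: "nat \<Rightarrow> nat \<Rightarrow> complex \<Rightarrow> complex" where
  "Lstar_poly m k z = (\<Sum>n<k. z ^ (n + 1) / (of_int (int n - int k)) ^ m)"

definition Lstar_of :: "nat \<Rightarrow> nat \<Rightarrow> (complex \<Rightarrow> complex) \<Rightarrow> complex \<Rightarrow> complex" where
  "Lstar_of m k G z = z ^ (k + 1) * G z + Lstar_poly m k z + z ^ (k + 1) * Ln z ^ m / of_nat (fact m)"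

lemma holomorphic_on_Lstar_poly: "Lstar_poly m k holomorphic_on S"
  unfolding Lstar_poly_def[abs_def] by (intro holomorphic_intros) auto

lemma Lstar_series_sum_eq:
  assumes z: "norm z < 1"
  shows "(\<Sum>n. if n = k then 0 else z ^ (n + 1) / (of_int (int n - int k)) ^ m) =
    z ^ (k + 1) * polylog m z + Lstar_poly m k z"
proof -
  define a where "a = (\<lambda>n. if n = k then 0 else z ^ (n + 1) / (of_int (int n - int k) :: complex) ^ m)"
  have "(\<lambda>n. a (n + k)) = (\<lambda>n. z ^ (k + 1) * (polylog_coeff m n * z ^ n))"
    by (rule ext, case_tac "n = 0") (auto simp: a_def polylog_coeff_def power_add field_simps)
  moreover have "(\<lambda>n. z ^ (k + 1) * (polylog_coeff m n * z ^ n)) sums (z ^ (k + 1) * polylog m z)"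
    unfolding polylog_def using summable_polylog_coeff[OF z, of m 0]
    by (intro sums_mult summable_sums) simp
  ultimately have "a sums (z ^ (k + 1) * polylog m z + (\<Sum>i<k. a i))"
    by (simp only: sums_iff_shift[symmetric])
  moreover have "(\<Sum>i<k. a i) = Lstar_poly m k z"
    unfolding Lstar_poly_def a_def by (rule sum.cong) auto
  ultimately show ?thesis by (simp add: a_def sums_iff)
qed

lemma Omega_iff: "z \<in> Omega \<longleftrightarrow> Im z \<noteq> 0 \<or> (0 < Re z \<and> Re z < 1)"
  by (auto simp: Omega_def complex_is_Real_iff)

lemma open_Omega: "open Omega"
proof -
  have "Omega = {z. Im z < 0} \<union> {z. 0 < Im z} \<union> ({z. 0 < Re z} \<inter> {z. Re z < 1})"
    by (auto simp: Omega_iff)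
  moreover have "open ({z::complex. Im z < 0} \<union> {z. 0 < Im z} \<union> ({z. 0 < Re z} \<inter> {z. Re z < 1}))"
    by (intro open_Un open_Int open_halfspace_Im_lt open_halfspace_Im_gt
        open_halfspace_Re_gt open_halfspace_Re_lt)
  ultimately show ?thesis by simp
qed

lemma connected_Omega: "connected Omega"
proof -
  have "connected ({z. 0 < Im z} \<union> ({z. 0 < Re z} \<inter> {z. Re z < 1}))"
    by (rule connected_Un_common_point[of _ _ "1/2 + \<i>"])
      (auto intro: convex_connected convex_Int convex_halfspace_Im_gt convex_halfspace_Re_gt convex_halfspace_Re_lt)
  then have "connected ({z. 0 < Im z} \<union> ({z. 0 < Re z} \<inter> {z. Re z < 1}) \<union> {z. Im z < 0})"
    by (rule connected_Un_common_point[of _ _ "1/2 - \<i>"])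
      (auto intro: convex_connected convex_halfspace_Im_lt)
  moreover have "{z. 0 < Im z} \<union> ({z. 0 < Re z} \<inter> {z. Re z < 1}) \<union> {z. Im z < 0} = Omega"
    by (auto simp: Omega_iff)
  ultimately show ?thesis by simp
qed

lemma Lstar_fun_Lstar_of:
  assumes hG: "G holomorphic_on - ray_ge1" and sG: "\<forall>z\<in>ball 0 1. G z = polylog m z"
  shows "Lstar_fun m k (Lstar_of m k G)"
  unfolding Lstar_fun_def
proof
  have "Omega \<subseteq> - ray_ge1" "\<And>z. z \<in> Omega \<Longrightarrow> z \<notin> \<real>\<^sub>\<le>\<^sub>0"
    by (auto simp: Omega_def ray_ge1_def complex_nonpos_Reals_iff complex_is_Real_iff)
  then show "Lstar_of m k G holomorphic_on Omega"
    unfolding Lstar_of_def[abs_def] using holomorphic_on_subset[OF hG]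
    by (intro holomorphic_intros holomorphic_on_Lstar_poly) auto
  show "\<forall>z\<in>Omega \<inter> ball 0 1. Lstar_of m k G z = Lstar_series m k z"
    using sG Lstar_series_sum_eq by (auto simp: Lstar_of_def Lstar_series_def)
qed

lemma Lstar_fun_unique:
  assumes "Lstar_fun m k L" "Lstar_fun m k L'" "z \<in> Omega"
  shows "L z = L' z"
proof (rule analytic_continuation_open[of "Omega \<inter> ball 0 1" Omega L L' z])
  have "\<i>/2 \<in> Omega \<inter> ball 0 1" by (simp add: Omega_iff norm_divide)
  then show "Omega \<inter> ball 0 1 \<noteq> {}" by blast
qed (use assms open_Omega connected_Omega in \<open>auto simp: Lstar_fun_def\<close>)

lemma Bvec_Lstar_of:
  assumes "L z = Lstar_of m k G z" "l \<le> m"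
  shows "Bvec m k L l z = z ^ (k + 1) * (Ln z ^ (m - l) / of_nat (fact (m - l))) +
    (if l = 0 then z ^ (k + 1) * G z + Lstar_poly m k z else 0)"
  using assms by (auto simp: Bvec_def bfun_def Lstar_of_def)

section \<open>The monodromy matrices\<close>

lemma add_power_div_fact:
  fixes w c :: complex
  shows "(w + c) ^ e / of_nat (fact e) = (\<Sum>r\<le>e. c ^ r / of_nat (fact r) * (w ^ (e - r) / of_nat (fact (e - r))))"
proof -
  have "(w + c) ^ e / of_nat (fact e) = (\<Sum>r\<le>e. of_nat (e choose r) * c ^ r * w ^ (e - r) / of_nat (fact e))"
    using binomial_ring[of c w e] by (simp add: add.commute sum_divide_distrib)
  also have "\<dots> = (\<Sum>r\<le>e. c ^ r / of_nat (fact r) * (w ^ (e - r) / of_nat (fact (e - r))))"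
  proof (rule sum.cong[OF refl])
    fix r assume "r \<in> {..e}"
    then have "(of_nat (e choose r) :: complex) = fact e / (fact r * fact (e - r))"
      by (intro binomial_fact) simp
    then show "of_nat (e choose r) * c ^ r * w ^ (e - r) / of_nat (fact e) =
        c ^ r / of_nat (fact r) * (w ^ (e - r) / of_nat (fact (e - r)))"
      by (simp add: field_simps)
  qed
  finally show ?thesis .
qed

lemma sum_rho0_row:
  assumes "i \<le> m"
  shows "(\<Sum>l<Suc m. rho0 i l * X l) = (\<Sum>r\<le>m - i. (2 * pi * \<i>) ^ r / of_nat (fact r) * X (i + r))"
proof -
  have "(\<Sum>l<Suc m. rho0 i l * X l) = (\<Sum>l\<in>{0 + i..(m - i) + i}. rho0 i l * X l)"
    using assms by (intro sum.mono_neutral_right) (auto simp: rho0_def)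
  also have "\<dots> = (\<Sum>r\<in>{0..m - i}. rho0 i (r + i) * X (r + i))"
    by (rule sum.shift_bounds_cl_nat_ivl)
  also have "\<dots> = (\<Sum>r\<le>m - i. (2 * pi * \<i>) ^ r / of_nat (fact r) * X (i + r))"
    by (rule sum.cong) (auto simp: rho0_def add.commute atLeast0AtMost)
  finally show ?thesis .
qed

text \<open>The rows of rho0 act on a vector of powers of a logarithm as the shift log \<mapsto> log + 2\<pi>i.\<close>
lemma sum_rho0_log_powers:
  assumes i: "i \<le> m"
    and X: "\<And>l. l \<le> m \<Longrightarrow> X l = a * (w ^ (m - l) / of_nat (fact (m - l))) + (if l = 0 then T else 0)"
  shows "(\<Sum>l<Suc m. rho0 i l * X l) =
    (if i = 0 then T else 0) + a / of_nat (fact (m - i)) * (w + 2 * pi * \<i>) ^ (m - i)"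
proof -
  define c where "c = 2 * pi * \<i>"
  have "(\<Sum>l<Suc m. rho0 i l * X l) = (\<Sum>r\<le>m - i. c ^ r / of_nat (fact r) * X (i + r))"
    unfolding c_def by (rule sum_rho0_row[OF i])
  also have "\<dots> = (\<Sum>r\<le>m - i. a * (c ^ r / of_nat (fact r) * (w ^ ((m - i) - r) / of_nat (fact ((m - i) - r)))))
      + (\<Sum>r\<le>m - i. c ^ r / of_nat (fact r) * (if i + r = 0 then T else 0))"
    by (subst sum.distrib[symmetric], rule sum.cong[OF refl]) (use i in \<open>auto simp: X algebra_simps\<close>)
  also have "(\<Sum>r\<le>m - i. c ^ r / of_nat (fact r) * (if i + r = 0 then T else 0)) = (if i = 0 then T else 0)"
    by (simp add: sum.atMost_shift)
  also have "(\<Sum>r\<le>m - i. a * (c ^ r / of_nat (fact r) * (w ^ ((m - i) - r) / of_nat (fact ((m - i) - r))))) =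
      a * ((w + c) ^ (m - i) / of_nat (fact (m - i)))"
    by (simp only: add_power_div_fact sum_distrib_left)
  finally show ?thesis by (simp add: c_def field_simps)
qed

lemma sum_rho1_row:
  assumes "i \<le> m" "1 \<le> m"
  shows "(\<Sum>l<Suc m. rho1 i l * X l) = (if i = 0 then X 0 - 2 * pi * \<i> * X 1 else X i)"
proof (cases "i = 0")
  case True
  have "(\<Sum>l<Suc m. rho1 i l * X l) = (\<Sum>l\<in>{0, 1}. rho1 i l * X l)"
    by (rule sum.mono_neutral_right) (use assms True in \<open>auto simp: rho1_def\<close>)
  then show ?thesis using True by (simp add: rho1_def)
next
  case False
  have "(\<Sum>l<Suc m. rho1 i l * X l) = (\<Sum>l\<in>{i}. rho1 i l * X l)"
    by (rule sum.mono_neutral_right) (use assms False in \<open>auto simp: rho1_def\<close>)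
  then show ?thesis using False by (simp add: rho1_def)
qed

definition unitriangular :: "nat \<Rightarrow> (nat \<Rightarrow> nat \<Rightarrow> complex) set" where
  "unitriangular n = {A. \<forall>i<n. \<forall>l<n. (l < i \<longrightarrow> A i l = 0) \<and> A i i = 1}"

lemma rho0_unitriangular: "rho0 \<in> unitriangular n"
  by (simp add: unitriangular_def rho0_def)

lemma rho1_unitriangular: "rho1 \<in> unitriangular n"
  by (simp add: unitriangular_def rho1_def)

lemma mmul_assoc: "mmul n (mmul n A B) C i l = mmul n A (mmul n B C) i l"
  unfolding mmul_def
  by (simp add: sum_distrib_left sum_distrib_right mult.assoc) (rule sum.swap)

lemma mmul_idm_left: "i < n \<Longrightarrow> mmul n idm A i l = A i l"
  unfolding mmul_def idm_def by (simp add: if_distrib[of "\<lambda>x. x * _"] cong: if_cong)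

lemma mmul_idm_right: "l < n \<Longrightarrow> mmul n A idm i l = A i l"
  unfolding mmul_def idm_def by (simp add: if_distrib[of "\<lambda>x. _ * x"] cong: if_cong)

lemma mmul_cong_right: "(\<And>j. j < n \<Longrightarrow> X j l = Y j l) \<Longrightarrow> mmul n A X i l = mmul n A Y i l"
  unfolding mmul_def by (rule sum.cong) auto

lemma mmul_add_left: "mmul n (\<lambda>i l. X i l + Y i l) A i l = mmul n X A i l + mmul n Y A i l"
  unfolding mmul_def by (simp add: distrib_right sum.distrib)

lemma mmul_add_right: "mmul n A (\<lambda>i l. X i l + Y i l) i l = mmul n A X i l + mmul n A Y i l"
  unfolding mmul_def by (simp add: distrib_left sum.distrib)

lemma mmul_sum_left:
  "mmul n (\<lambda>i l. \<Sum>p<q. c p * X p i l) A i l = (\<Sum>p<q. c p * mmul n (X p) A i l)"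
  unfolding mmul_def by (simp add: sum_distrib_left sum_distrib_right mult.assoc) (rule sum.swap)

lemma mmul_sum_right:
  "mmul n A (\<lambda>i l. \<Sum>p<q. c p * X p i l) i l = (\<Sum>p<q. c p * mmul n A (X p) i l)"
  unfolding mmul_def by (simp add: sum_distrib_left mult.left_commute) (rule sum.swap)

lemma mpow_Suc_right:
  "i < n \<Longrightarrow> l < n \<Longrightarrow> mpow n A (Suc p) i l = mmul n (mpow n A p) A i l"
proof (induction p arbitrary: i l)
  case 0
  then show ?case by (simp add: mmul_idm_left mmul_idm_right)
next
  case (Suc p)
  have "mpow n A (Suc (Suc p)) i l = mmul n A (mmul n (mpow n A p) A) i l"
    by (simp, rule mmul_cong_right) (use Suc in auto)
  then show ?case by (simp add: mmul_assoc)
qed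

lemma mpow_strictly_upper_eq_0:
  assumes "\<forall>i<n. \<forall>l<n. l \<le> i \<longrightarrow> N i l = 0"
  shows "i < n \<Longrightarrow> l < n \<Longrightarrow> l < i + p \<Longrightarrow> mpow n N p i l = 0"
proof (induction p arbitrary: i l)
  case 0
  then show ?case by (simp add: idm_def)
next
  case (Suc p)
  have "N i j * mpow n N p j l = 0" if "j < n" for j
    using assms Suc.prems Suc.IH[of j l] that by (cases "j \<le> i") auto
  then show ?case by (auto simp: mmul_def intro!: sum.neutral)
qed

lemma unitriangular_minus_idm_strictly_upper:
  "A \<in> unitriangular n \<Longrightarrow> \<forall>i<n. \<forall>l<n. l \<le> i \<longrightarrow> A i l - idm i l = 0"
  unfolding unitriangular_def idm_def by (auto simp: le_less)

lemma mmul_unitriangular: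
  assumes A: "A \<in> unitriangular n" and B: "B \<in> unitriangular n"
  shows "mmul n A B \<in> unitriangular n"
proof -
  have "A i j * B j l = 0" if "i < n" "l < n" "l < i" "j < n" for i j l
    using A B that unfolding unitriangular_def by (cases "j < i") auto
  then have "mmul n A B i l = 0" if "i < n" "l < n" "l < i" for i l
    using that by (auto simp: mmul_def intro!: sum.neutral)
  moreover have "mmul n A B i i = 1" if "i < n" for i
  proof -
    have "mmul n A B i i = (\<Sum>j\<in>{i}. A i j * B j i)"
      unfolding mmul_def using A B that
      by (intro sum.mono_neutral_right) (auto simp: unitriangular_def neq_iff)
    then show ?thesis using A B that by (simp add: unitriangular_def)
  qed
  ultimately show ?thesis by (simp add: unitriangular_def)
qed

lemma telescope_alternating: "(\<Sum>p<q. (-1::complex) ^ p * (a p + a (Suc p))) = a 0 - (-1) ^ q * a q"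
  by (induction q) (auto simp: algebra_simps)

text \<open>The inverse of I + N with N nilpotent is the finite Neumann series \<Sum> (-N)^p.\<close>
lemma unitriangular_inverse:
  assumes A: "A \<in> unitriangular n"
  shows "\<exists>B\<in>unitriangular n. meq n (mmul n A B) idm \<and> meq n (mmul n B A) idm"
proof -
  define N where "N = (\<lambda>i l. A i l - idm i l)"
  have Nz: "mpow n N p i l = 0" if "i < n" "l < n" "l < i + p" for i l p
    unfolding N_def by (rule mpow_strictly_upper_eq_0[OF unitriangular_minus_idm_strictly_upper[OF A] that])
  have A_eq: "A = (\<lambda>i l. idm i l + N i l)" by (simp add: N_def)
  define B where "B = (\<lambda>i l. \<Sum>p<n. (-1::complex) ^ p * mpow n N p i l)"
  have "B i l = 0" if "i < n" "l < n" "l < i" for i l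
    unfolding B_def by (rule sum.neutral) (use Nz that in auto)
  moreover have "B i i = 1" if "i < n" for i
  proof -
    have "B i i = (\<Sum>p\<in>{0}. (-1::complex) ^ p * mpow n N p i i)"
      unfolding B_def by (rule sum.mono_neutral_right) (use that Nz in auto)
    then show ?thesis by (simp add: idm_def)
  qed
  ultimately have "B \<in> unitriangular n" by (simp add: unitriangular_def)
  moreover have "mmul n A B i l = idm i l" if "i < n" "l < n" for i l
  proof -
    have "mmul n A B i l = (\<Sum>p<n. (-1) ^ p * (mpow n N p i l + mpow n N (Suc p) i l))"
      unfolding B_def mmul_sum_right by (simp add: A_eq mmul_add_left mmul_idm_left that)
    also have "\<dots> = idm i l" by (subst telescope_alternating) (use Nz that in auto)
    finally show ?thesis .
  qed
  moreover have "mmul n B A i l = idm i l" if "i < n" "l < n" for i l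
  proof -
    have "mmul n B A i l = (\<Sum>p<n. (-1) ^ p * (mpow n N p i l + mpow n N (Suc p) i l))"
      unfolding B_def mmul_sum_left
      by (simp add: A_eq mmul_add_right mmul_idm_right mpow_Suc_right[OF that, symmetric] that
          del: mpow.simps(2))
    also have "\<dots> = idm i l" by (subst telescope_alternating) (use Nz that in auto)
    finally show ?thesis .
  qed
  ultimately show ?thesis unfolding meq_def by blast
qed

lemma unipotent_subgroup_unitriangular: "unipotent_subgroup n (unitriangular n)"
  unfolding unipotent_subgroup_def
proof (intro conjI ballI)
  show "idm \<in> unitriangular n" by (simp add: unitriangular_def idm_def)
  fix A assume A: "A \<in> unitriangular n"
  show "\<exists>B\<in>unitriangular n. meq n (mmul n A B) idm \<and> meq n (mmul n B A) idm"
    using A by (rule unitriangular_inverse)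
  show "meq n (mpow n (\<lambda>i l. A i l - idm i l) n) (\<lambda>i l. 0)"
    unfolding meq_def using mpow_strictly_upper_eq_0[OF unitriangular_minus_idm_strictly_upper[OF A]] by auto
  fix B assume "B \<in> unitriangular n"
  then show "\<exists>C\<in>unitriangular n. meq n C (mmul n A B)"
    using mmul_unitriangular[OF A] unfolding meq_def by blast
qed

section \<open>Monodromy along Z_0 and Z_1\<close>

lemma Ln_minus_add_pi:
  assumes "0 < Im z"
  shows "\<i> * of_real pi + Ln (- z) = Ln z"
proof -
  have "0 < Im (Ln z)" "Im (Ln z) < pi" using Im_Ln_pos_lt_imp[OF assms] by auto
  moreover have "z \<noteq> 0" using assms by auto
  then have "exp (Ln z - \<i> * of_real pi) = - z" by (simp add: exp_diff)
  ultimately have "Ln (- z) = Ln z - \<i> * of_real pi" by (intro Ln_unique) auto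
  then show ?thesis by simp
qed

lemma Ln_divide_2:
  assumes "0 < Re w"
  shows "of_real (ln 2) + Ln (w / 2) = Ln w"
proof (rule Ln_unique[symmetric])
  have "w \<noteq> 0" using assms by auto
  then show "exp (of_real (ln 2) + Ln (w / 2)) = w" by (simp add: exp_add exp_of_real)
  have "\<bar>Im (Ln (w / 2))\<bar> < pi / 2" using assms by (intro Re_Ln_pos_lt_imp) simp
  then show "- pi < Im (of_real (ln 2) + Ln (w / 2))" "Im (of_real (ln 2) + Ln (w / 2)) \<le> pi"
    by auto
qed

lemma monodromy_Z0:
  assumes hG: "G holomorphic_on - ray_ge1" and L: "\<forall>z\<in>Omega. L z = Lstar_of m k G z"
    and Z: "Z0_loop \<gamma>"
  shows "monodromy_is \<gamma> (m + 1) (Bvec m k L) rho0"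
proof -
  define T where "T = (\<lambda>z. z ^ (k + 1) * G z + Lstar_poly m k z)"
  have \<gamma>: "path \<gamma>" "\<gamma> 0 = -1" "\<gamma> 1 = -1" "0 \<notin> path_image \<gamma>" "winding_number \<gamma> 0 = 1"
    "path_image \<gamma> \<subseteq> - ray_ge1 - {0}"
    using Z by (auto simp: Z0_loop_def simple_path_imp_path pathstart_def pathfinish_def ray_ge1_def)
  have E: "\<forall>\<^sub>F z in at (-1) within UHP. \<i> * of_real pi + Ln ((z - 0) / (-1 - 0)) = Ln z \<and>
      (\<forall>l\<le>m. Bvec m k L l z = z ^ (k + 1) * (Ln z ^ (m - l) / of_nat (fact (m - l))) +
        (if l = 0 then T z else 0))"
    using eventually_at_minus_one_within_UHP
  proof eventually_elim
    case (elim z)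
    then have "L z = Lstar_of m k G z" using L by (simp add: Omega_iff)
    with elim show ?case by (simp add: T_def Bvec_Lstar_of Ln_minus_add_pi)
  qed
  show ?thesis
  proof (rule monodromy_is_log_power_family[OF \<gamma>(1-5), where \<sigma> = 1 and c = "\<i> * of_real pi"
        and lg = Ln and V = "- ray_ge1 - {0}" and A = "\<lambda>i z. if i = 0 then T z else 0"
        and B = "\<lambda>i z. z ^ (k + 1) / of_nat (fact (m - i))" and e = "\<lambda>i. m - i"])
    show "open (- ray_ge1 - {0})" using open_Compl_ray_ge1 by auto
    have "T holomorphic_on - ray_ge1 - {0}"
      using holomorphic_on_subset[OF hG, of "- ray_ge1 - {0}"]
      by (auto simp: T_def intro!: holomorphic_intros holomorphic_on_Lstar_poly)
    then show "(\<lambda>z. if i = 0 then T z else 0) holomorphic_on - ray_ge1 - {0}" for i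
      by (cases "i = 0") auto
    show "\<forall>\<^sub>F z in at (-1) within UHP.
        (if i = 0 then T z else 0) + z ^ (k + 1) / of_nat (fact (m - i)) * Ln z ^ (m - i) = Bvec m k L i z"
      if "i < m + 1" for i
      using E by eventually_elim (use that in auto)
    show "\<forall>\<^sub>F z in at (-1) within UHP.
        (if i = 0 then T z else 0) + z ^ (k + 1) / of_nat (fact (m - i)) * (Ln z + 2 * pi * \<i>) ^ (m - i) =
        (\<Sum>l<m + 1. rho0 i l * Bvec m k L l z)"
      if "i < m + 1" for i
      using E
    proof eventually_elim
      case (elim z)
      have "i \<le> m" using that by simp
      from sum_rho0_log_powers[OF this, of "\<lambda>l. Bvec m k L l z" "z ^ (k + 1)" "Ln z" "T z"] elim
      show ?case by simp
    qed
    show "\<forall>\<^sub>F z in at (-1) within UHP. \<i> * of_real pi + Ln ((z - 0) / (-1 - 0)) = Ln z"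
      by (rule eventually_mono[OF E]) blast
    show "(\<lambda>z. z ^ (k + 1) / of_nat (fact (m - i))) holomorphic_on - ray_ge1 - {0}" for i
      by (intro holomorphic_intros) simp
  qed (simp_all add: \<gamma>(6))
qed

lemma monodromy_Z1:
  assumes m: "1 \<le> m" and hP: "\<Phi> holomorphic_on - ray_down"
    and eP: "\<forall>z\<in>- ray_ge1 - ray_down. \<Phi> z = G z + polylog_jump m z * Ln (1 - z)"
    and L: "\<forall>z\<in>Omega. L z = Lstar_of m k G z" and Z: "Z1_loop \<gamma>"
  shows "monodromy_is \<gamma> (m + 1) (Bvec m k L) rho1"
proof -
  define b where "b = (\<lambda>j z. z ^ (k + 1) * Ln_down z ^ j / of_nat (fact j))"
  have \<gamma>: "path \<gamma>" "\<gamma> 0 = -1" "\<gamma> 1 = -1" "1 \<notin> path_image \<gamma>" "winding_number \<gamma> 1 = 1"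
    "path_image \<gamma> \<subseteq> - ray_down - {1}"
    using Z by (auto simp: Z1_loop_def simple_path_imp_path pathstart_def pathfinish_def ray_down_def)
  have E: "\<forall>\<^sub>F z in at (-1) within UHP. of_real (ln 2) + Ln ((z - 1) / (-1 - 1)) = Ln (1 - z) \<and>
      Ln_down z = Ln z \<and> \<Phi> z = G z + polylog_jump m z * Ln (1 - z) \<and> L z = Lstar_of m k G z"
    using eventually_at_minus_one_within_UHP
  proof eventually_elim
    case (elim z)
    have eq: "(z - 1) / (-1 - 1) = (1 - z) / 2" by (simp add: field_simps)
    have "0 < Re (1 - z)" using elim by simp
    then have "of_real (ln 2) + Ln ((z - 1) / (-1 - 1)) = Ln (1 - z)"
      using Ln_divide_2 by (simp only: eq)
    then show ?case
      using elim Ln_down_eq_Ln[of z] eP L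
      by (auto simp: Omega_iff notin_ray_ge1_iff notin_ray_down_iff)
  qed
  have Bvec: "Bvec m k L i z = (if i = 0 then L z else b (m - i) z)" if "Ln_down z = Ln z" for i z
    using that by (simp add: Bvec_def bfun_def b_def)
  have jump: "b (m - 1) z = z ^ (k + 1) * polylog_jump m z" for z
    by (simp add: b_def polylog_jump_def)
  show ?thesis
  proof (rule monodromy_is_log_power_family[OF \<gamma>(1-5), where \<sigma> = "-1" and c = "of_real (ln 2)"
        and lg = "\<lambda>z. Ln (1 - z)" and V = "- ray_down - {1}"
        and A = "\<lambda>i z. if i = 0 then z ^ (k + 1) * \<Phi> z + Lstar_poly m k z + b m z else b (m - i) z"
        and B = "\<lambda>i z. if i = 0 then - (z ^ (k + 1) * polylog_jump m z) else 0" and e = "\<lambda>i. 1"])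
    show "open (- ray_down - {1})" using open_Compl_ray_down by auto
    have hb: "b j holomorphic_on - ray_down - {1}" for j
      using holomorphic_on_subset[OF holomorphic_on_Ln_down, of "- ray_down - {1}"]
      unfolding b_def[abs_def] by (auto intro!: holomorphic_intros)
    have "(\<lambda>z. z ^ (k + 1) * \<Phi> z + Lstar_poly m k z + b m z) holomorphic_on - ray_down - {1}"
      using holomorphic_on_subset[OF hP, of "- ray_down - {1}"] hb
      by (auto intro!: holomorphic_intros holomorphic_on_Lstar_poly)
    with hb show "(\<lambda>z. if i = 0 then z ^ (k + 1) * \<Phi> z + Lstar_poly m k z + b m z else b (m - i) z)
        holomorphic_on - ray_down - {1}" for i
      by (cases "i = 0") auto
    have "(\<lambda>z. - (z ^ (k + 1) * polylog_jump m z)) holomorphic_on - ray_down - {1}"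
      using holomorphic_on_subset[OF holomorphic_on_polylog_jump, of "- ray_down - {1}"]
      by (auto intro!: holomorphic_intros)
    then show "(\<lambda>z. if i = 0 then - (z ^ (k + 1) * polylog_jump m z) else 0) holomorphic_on - ray_down - {1}" for i
      by (cases "i = 0") auto
    show "\<forall>\<^sub>F z in at (-1) within UHP.
        (if i = 0 then z ^ (k + 1) * \<Phi> z + Lstar_poly m k z + b m z else b (m - i) z) +
        (if i = 0 then - (z ^ (k + 1) * polylog_jump m z) else 0) * Ln (1 - z) ^ 1 = Bvec m k L i z"
      for i
      using E by eventually_elim (auto simp: Bvec b_def Lstar_of_def algebra_simps)
    show "\<forall>\<^sub>F z in at (-1) within UHP.
        (if i = 0 then z ^ (k + 1) * \<Phi> z + Lstar_poly m k z + b m z else b (m - i) z) +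
        (if i = 0 then - (z ^ (k + 1) * polylog_jump m z) else 0) * (Ln (1 - z) + 2 * pi * \<i>) ^ 1 =
        (\<Sum>l<m + 1. rho1 i l * Bvec m k L l z)"
      if "i < m + 1" for i
      using E
    proof eventually_elim
      case (elim z)
      have "(\<Sum>l<m + 1. rho1 i l * Bvec m k L l z) =
          (if i = 0 then Bvec m k L 0 z - 2 * pi * \<i> * Bvec m k L 1 z else Bvec m k L i z)"
        using sum_rho1_row[of i m "\<lambda>l. Bvec m k L l z"] that m by simp
      then show ?case
        using elim m jump[of z] by (auto simp: Bvec b_def Lstar_of_def algebra_simps)
    qed
    show "\<forall>\<^sub>F z in at (-1) within UHP. of_real (ln 2) + Ln ((z - 1) / (-1 - 1)) = Ln (1 - z)"
      by (rule eventually_mono[OF E]) blast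
  qed (simp_all add: \<gamma>(6) exp_of_real)
qed

theorem theorem8p5:
  fixes m k :: nat
  assumes "1 \<le> m"
  shows "(\<exists>L. Lstar_fun m k L) \<and>
    (\<forall>L. Lstar_fun m k L \<longrightarrow>
       (\<forall>\<gamma>. Z0_loop \<gamma> \<longrightarrow> monodromy_is \<gamma> (m + 1) (Bvec m k L) rho0) \<and>
       (\<forall>\<gamma>. Z1_loop \<gamma> \<longrightarrow> monodromy_is \<gamma> (m + 1) (Bvec m k L) rho1)) \<and>
    (\<exists>U. unipotent_subgroup (m + 1) U \<and> rho0 \<in> U \<and> rho1 \<in> U)"
proof -
  obtain G \<Phi> where hG: "G holomorphic_on - ray_ge1" and sG: "\<forall>z\<in>ball 0 1. G z = polylog m z"
    and hP: "\<Phi> holomorphic_on - ray_down"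
    and eP: "\<forall>z\<in>- ray_ge1 - ray_down. \<Phi> z = G z + polylog_jump m z * Ln (1 - z)"
    using polylog_continuations[OF assms] by blast
  have Lstar: "Lstar_fun m k (Lstar_of m k G)"
    using hG sG by (rule Lstar_fun_Lstar_of)
  have "(\<forall>\<gamma>. Z0_loop \<gamma> \<longrightarrow> monodromy_is \<gamma> (m + 1) (Bvec m k L) rho0) \<and>
      (\<forall>\<gamma>. Z1_loop \<gamma> \<longrightarrow> monodromy_is \<gamma> (m + 1) (Bvec m k L) rho1)" if "Lstar_fun m k L" for L
  proof -
    have "\<forall>z\<in>Omega. L z = Lstar_of m k G z" using Lstar_fun_unique[OF that Lstar] by blast
    then show ?thesis using monodromy_Z0[OF hG] monodromy_Z1[OF assms hP eP] by blast
  qed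
  with Lstar show ?thesis
    using unipotent_subgroup_unitriangular rho0_unitriangular rho1_unitriangular by blast
qed

end
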